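(* Let $A$ be an MV-algebra and $\operatorname{Der}(A)$ the set of $(\odot,\vee)$-derivations on $A$. Then: (1) if $|A|\ge 3$ then $|\operatorname{Der}(A)|\ge 5$; (2) if $|A|\ge 4$ then $|\operatorname{Der}(A)|\ge 7$; (3) if $|A|\ge 5$ then $|\operatorname{Der}(A)|\ge 13$.
   Context: An MV-algebra is an algebra $(A,\oplus,{}^*,0)$ of type $(2,1,0)$ satisfying: $x\oplus(y\oplus z)=(x\oplus y)\oplus z$, $x\oplus y=y\oplus x$, $x\oplus 0=x$, $x^{**}=x$, $x\oplus 0^*=0^*$, $(x^*\oplus y)^*\oplus y=(y^*\oplus x)^*\oplus x$. Put $1=0^*$ and $x\odot y=(x^*\oplus y^* )^*$. The natural order is $x\le y$ iff $x^*\oplus y=1$, with lattice operations $x\vee y=(x\odot y^* )\oplus y$, $x\wedge y=x\odot(x^*\oplus y)$. A $(\odot,\vee)$-derivation on $A$ is a map $d:A\to A$ with $d(x\odot y)=(d(x)\odot y)\vee(x\odot d(y))$ for all $x,y\in A$. *)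

theory Defs
  imports Main
begin

definition mv_algebra :: "('a \<Rightarrow> 'a \<Rightarrow> 'a) \<Rightarrow> ('a \<Rightarrow> 'a) \<Rightarrow> 'a \<Rightarrow> bool" where
  "mv_algebra oplus neg zero \<longleftrightarrow>
     (\<forall>x y z. oplus x (oplus y z) = oplus (oplus x y) z) \<and>
     (\<forall>x y. oplus x y = oplus y x) \<and>
     (\<forall>x. oplus x zero = x) \<and>
     (\<forall>x. neg (neg x) = x) \<and>
     (\<forall>x. oplus x (neg zero) = neg zero) \<and>
     (\<forall>x y. oplus (neg (oplus (neg x) y)) y = oplus (neg (oplus (neg y) x)) x)"

definition mv_odot :: "('a \<Rightarrow> 'a \<Rightarrow> 'a) \<Rightarrow> ('a \<Rightarrow> 'a) \<Rightarrow> 'a \<Rightarrow> 'a \<Rightarrow> 'a" where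
  "mv_odot oplus neg x y = neg (oplus (neg x) (neg y))"

definition mv_join :: "('a \<Rightarrow> 'a \<Rightarrow> 'a) \<Rightarrow> ('a \<Rightarrow> 'a) \<Rightarrow> 'a \<Rightarrow> 'a \<Rightarrow> 'a" where
  "mv_join oplus neg x y = oplus (mv_odot oplus neg x (neg y)) y"

definition odot_join_derivation ::
  "('a \<Rightarrow> 'a \<Rightarrow> 'a) \<Rightarrow> ('a \<Rightarrow> 'a) \<Rightarrow> ('a \<Rightarrow> 'a) \<Rightarrow> bool" where
  "odot_join_derivation oplus neg d \<longleftrightarrow>
     (\<forall>x y. d (mv_odot oplus neg x y) =
        mv_join oplus neg (mv_odot oplus neg (d x) y) (mv_odot oplus neg x (d y)))"

definition Der :: "('a \<Rightarrow> 'a \<Rightarrow> 'a) \<Rightarrow> ('a \<Rightarrow> 'a) \<Rightarrow> ('a \<Rightarrow> 'a) set" where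
  "Der oplus neg = {d. odot_join_derivation oplus neg d}"

definition card_ge :: "nat \<Rightarrow> 'b set \<Rightarrow> bool" where
  "card_ge n S \<longleftrightarrow> infinite S \<or> n \<le> card S"

end

theory Submission imports Defs begin

text \<open>For b \<le> a the map d(x) = a \<odot> x (x \<noteq> 1), d(1) = b is a derivation, and distinct pairs
with a \<noteq> 0 give distinct derivations. The pairs (a,0), (a,a) for a \<noteq> 0 and (1,b) for
0 < b < 1 already yield 3n - 4 derivations on an n-element algebra. Once n \<ge> 5 two more
appear: either some non-zero a annihilates every x \<noteq> 1, so it lies below every non-zero element
and supplies two more admissible pairs, or the zero map is a derivation not of this form, and
three elements strictly between 0 and 1 always contain a comparable pair.\<close>

lemma card_ge_mono: "card_ge m S \<Longrightarrow> k \<le> m \<Longrightarrow> card_ge k S"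
  by (auto simp: card_ge_def)

lemma card_ge_subset: "finite T \<Longrightarrow> T \<subseteq> S \<Longrightarrow> card_ge (card T) S"
  by (auto simp: card_ge_def intro: card_mono)

locale mv =
  fixes oplus :: "'a \<Rightarrow> 'a \<Rightarrow> 'a" (infixl "\<oplus>" 65) and neg :: "'a \<Rightarrow> 'a" and zero :: 'a ("\<zero>")
  assumes mv_algebra: "mv_algebra oplus neg zero"
begin

abbreviation one ("\<one>") where "\<one> \<equiv> neg \<zero>"
abbreviation odot (infixl "\<odot>" 70) where "x \<odot> y \<equiv> mv_odot oplus neg x y"
abbreviation join (infixl "\<squnion>" 65) where "x \<squnion> y \<equiv> mv_join oplus neg x y"
abbreviation le (infix "\<preceq>" 50) where "x \<preceq> y \<equiv> neg x \<oplus> y = \<one>"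

lemma oplus_assoc: "x \<oplus> (y \<oplus> w) = x \<oplus> y \<oplus> w"
  and oplus_commute: "x \<oplus> y = y \<oplus> x"
  and oplus_zero_right [simp]: "x \<oplus> \<zero> = x"
  and neg_neg [simp]: "neg (neg x) = x"
  and oplus_one_right [simp]: "x \<oplus> \<one> = \<one>"
  and mv_axiom: "neg (neg x \<oplus> y) \<oplus> y = neg (neg y \<oplus> x) \<oplus> x"
  using mv_algebra unfolding mv_algebra_def by blast+

lemma oplus_zero_left [simp]: "\<zero> \<oplus> x = x"
  by (metis oplus_commute oplus_zero_right)

lemma oplus_one_left [simp]: "\<one> \<oplus> x = \<one>"
  by (metis oplus_commute oplus_one_right)

lemma neg_oplus_self: "neg x \<oplus> x = \<one>"
  using mv_axiom [of \<one> x] by simp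

lemma neg_eq_iff [simp]: "neg x = neg y \<longleftrightarrow> x = y"
  by (metis neg_neg)

lemma zero_neq_one:
  assumes "2 \<le> card (UNIV :: 'a set)" shows "\<zero> \<noteq> \<one>"
proof
  assume "\<zero> = \<one>"
  then have "x = \<zero>" for x
    by (metis oplus_one_right oplus_zero_right)
  then have "UNIV = {\<zero>}" by blast
  then have "card (UNIV :: 'a set) = card {\<zero>}" by (rule arg_cong)
  with assms show False by simp
qed

lemma odot_def': "x \<odot> y = neg (neg x \<oplus> neg y)"
  by (simp add: mv_odot_def)

lemma join_def': "x \<squnion> y = neg (neg x \<oplus> y) \<oplus> y"
  by (simp add: mv_join_def mv_odot_def)

lemma join_commute: "x \<squnion> y = y \<squnion> x"
  by (simp add: join_def' mv_axiom)

lemma odot_commute: "x \<odot> y = y \<odot> x"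
  by (simp add: odot_def' oplus_commute)

lemma odot_assoc: "x \<odot> y \<odot> w = x \<odot> (y \<odot> w)"
  by (simp add: odot_def' oplus_assoc)

lemma odot_one [simp]: "x \<odot> \<one> = x" "\<one> \<odot> x = x"
  by (simp_all add: odot_def')

lemma odot_zero [simp]: "x \<odot> \<zero> = \<zero>" "\<zero> \<odot> x = \<zero>"
  by (simp_all add: odot_def')

lemma odot_neg_self: "x \<odot> neg x = \<zero>"
  by (simp add: odot_def' neg_oplus_self)

lemma le_refl: "x \<preceq> x"
  by (rule neg_oplus_self)

lemma join_absorb2: "x \<preceq> y \<Longrightarrow> x \<squnion> y = y"
  by (simp add: join_def')

lemma join_absorb1: "y \<preceq> x \<Longrightarrow> x \<squnion> y = x"
  by (metis join_absorb2 join_commute)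

lemma join_idem [simp]: "x \<squnion> x = x"
  by (simp add: join_absorb2 le_refl)

lemma le_antisym: "x \<preceq> y \<Longrightarrow> y \<preceq> x \<Longrightarrow> x = y"
  by (metis join_absorb1 join_absorb2)

lemma le_iff_odot_neg_eq_zero: "x \<preceq> y \<longleftrightarrow> x \<odot> neg y = \<zero>"
  by (auto simp: odot_def')

lemma odot_le_left: "x \<odot> y \<preceq> x"
proof -
  have "neg (x \<odot> y) \<oplus> x = neg y \<oplus> (neg x \<oplus> x)"
    by (metis odot_def' neg_neg oplus_assoc oplus_commute)
  then show ?thesis by (simp add: neg_oplus_self)
qed

lemma odot_le_right: "x \<odot> y \<preceq> y"
  by (metis odot_le_left odot_commute)

lemma odot_eq_oneD: "x \<odot> y = \<one> \<Longrightarrow> x = \<one>"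
  using odot_le_left [of x y] by simp

lemma odot_mono:
  assumes "b \<preceq> a" shows "b \<odot> y \<preceq> a \<odot> y"
proof -
  have "neg (b \<odot> y) \<oplus> a \<odot> y = neg b \<oplus> (neg y \<oplus> neg (neg a \<oplus> neg y))"
    by (simp add: odot_def' oplus_assoc)
  also have "neg y \<oplus> neg (neg a \<oplus> neg y) = neg (y \<oplus> a) \<oplus> a"
    using mv_axiom [of a "neg y"] by (simp add: oplus_commute)
  also have "neg b \<oplus> (neg (y \<oplus> a) \<oplus> a) = (neg b \<oplus> a) \<oplus> neg (y \<oplus> a)"
    by (metis oplus_assoc oplus_commute)
  finally show ?thesis using assms by simp
qed

definition mult_der :: "'a \<Rightarrow> 'a \<Rightarrow> 'a \<Rightarrow> 'a" where
  "mult_der a b x = (if x = \<one> then b else a \<odot> x)"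

lemma mult_der_derivation:
  assumes "b \<preceq> a" shows "mult_der a b \<in> Der oplus neg"
  unfolding Der_def odot_join_derivation_def
proof (intro CollectI allI)
  fix x y
  consider "x = \<one>" | "y = \<one>" | "x \<noteq> \<one>" "y \<noteq> \<one>" by blast
  then show "mult_der a b (x \<odot> y) = mult_der a b x \<odot> y \<squnion> x \<odot> mult_der a b y"
  proof cases
    case 1
    then show ?thesis
      using odot_mono [OF assms, of y] by (simp add: mult_der_def join_absorb2)
  next
    case 2
    then show ?thesis
      using odot_mono [OF assms, of x] by (simp add: mult_der_def join_absorb1 odot_commute)
  next
    case 3
    then have "x \<odot> y \<noteq> \<one>" by (auto dest: odot_eq_oneD)
    moreover have "x \<odot> (a \<odot> y) = a \<odot> x \<odot> y"
      by (metis odot_assoc odot_commute)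
    ultimately show ?thesis
      using 3 by (simp add: mult_der_def odot_assoc del: neg_eq_iff)
  qed
qed

definition admissible_pairs :: "('a \<times> 'a) set" where
  "admissible_pairs = {(a, b). a \<noteq> \<zero> \<and> b \<preceq> a}"

lemma inj_on_mult_der: "inj_on (case_prod mult_der) admissible_pairs"
proof (rule inj_onI, clarsimp simp: admissible_pairs_def)
  fix a b a' b'
  assume "a \<noteq> \<zero>" "a' \<noteq> \<zero>" and eq: "mult_der a b = mult_der a' b'"
  then have "neg a \<noteq> \<one>" "neg a' \<noteq> \<one>" by auto
  have "a' \<odot> neg a = \<zero>"
    using fun_cong [OF eq, of "neg a"] \<open>neg a \<noteq> \<one>\<close> by (simp add: mult_der_def odot_neg_self)
  moreover have "a \<odot> neg a' = \<zero>"
    using fun_cong [OF eq, of "neg a'"] \<open>neg a' \<noteq> \<one>\<close> by (simp add: mult_der_def odot_neg_self)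
  ultimately have "a = a'"
    by (simp add: le_antisym flip: le_iff_odot_neg_eq_zero)
  moreover have "b = b'"
    using fun_cong [OF eq, of \<one>] by (simp add: mult_der_def)
  ultimately show "a = a' \<and> b = b'" ..
qed

definition basic_pairs :: "('a \<times> 'a) set" where
  "basic_pairs = (\<lambda>a. (a, \<zero>)) ` (UNIV - {\<zero>}) \<union> (\<lambda>a. (a, a)) ` (UNIV - {\<zero>}) \<union>
     Pair \<one> ` (UNIV - {\<zero>, \<one>})"

definition strict_pairs :: "('a \<times> 'a) set" where
  "strict_pairs = {(a, b). b \<noteq> \<zero> \<and> b \<noteq> a \<and> a \<noteq> \<one> \<and> b \<preceq> a}"

lemma basic_pairs_subset: "\<zero> \<noteq> \<one> \<Longrightarrow> basic_pairs \<subseteq> admissible_pairs"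
  by (auto simp: basic_pairs_def admissible_pairs_def le_refl)

lemma strict_pairs_subset: "strict_pairs \<subseteq> admissible_pairs"
  by (auto simp: strict_pairs_def admissible_pairs_def)

lemma basic_strict_pairs_disjoint: "basic_pairs \<inter> strict_pairs = {}"
  by (auto simp: basic_pairs_def strict_pairs_def)

lemma card_basic_pairs:
  assumes "finite (UNIV :: 'a set)" "\<zero> \<noteq> \<one>"
  shows "card basic_pairs = 3 * card (UNIV :: 'a set) - 4"
proof -
  let ?n = "card (UNIV :: 'a set)"
  have "card ((\<lambda>a. (a, \<zero>)) ` (UNIV - {\<zero>})) = ?n - 1"
    "card ((\<lambda>a. (a, a)) ` (UNIV - {\<zero>})) = ?n - 1"
    "card (Pair \<one> ` (UNIV - {\<zero>, \<one>})) = ?n - 2"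
    using assms by (simp_all add: card_image inj_on_def card_Diff_subset)
  moreover have "?n \<ge> 2"
    using assms card_mono [of UNIV "{\<zero>, \<one>}"] by simp
  moreover have "card basic_pairs = card ((\<lambda>a. (a, \<zero>)) ` (UNIV - {\<zero>}))
      + card ((\<lambda>a. (a, a)) ` (UNIV - {\<zero>})) + card (Pair \<one> ` (UNIV - {\<zero>, \<one>}))"
  proof -
    have "(\<lambda>a. (a, \<zero>)) ` (UNIV - {\<zero>}) \<inter> (\<lambda>a. (a, a)) ` (UNIV - {\<zero>}) = {}"
      by auto
    moreover have "((\<lambda>a. (a, \<zero>)) ` (UNIV - {\<zero>}) \<union> (\<lambda>a. (a, a)) ` (UNIV - {\<zero>}))
        \<inter> Pair \<one> ` (UNIV - {\<zero>, \<one>}) = {}"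
      by auto
    ultimately show ?thesis
      unfolding basic_pairs_def using assms(1) by (simp add: card_Un_disjoint)
  qed
  ultimately show ?thesis by linarith
qed

lemma card_ge_Der_from_pairs:
  assumes "finite (UNIV :: 'a set)" "\<zero> \<noteq> \<one>" and "Q \<subseteq> strict_pairs"
    and "finite Z" "Z \<subseteq> Der oplus neg" "Z \<inter> case_prod mult_der ` admissible_pairs = {}"
  shows "card_ge (3 * card (UNIV :: 'a set) - 4 + card Q + card Z) (Der oplus neg)"
proof -
  let ?P = "basic_pairs \<union> Q"
  have admissible: "?P \<subseteq> admissible_pairs"
    using basic_pairs_subset strict_pairs_subset assms(2,3) by blast
  have "finite (UNIV :: ('a \<times> 'a) set)"
    using assms(1) by (simp add: finite_Prod_UNIV)
  then have finite_P: "finite ?P"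
    by (rule finite_subset [rotated]) simp
  have "card ?P = 3 * card (UNIV :: 'a set) - 4 + card Q"
    using finite_P assms(3) basic_strict_pairs_disjoint card_basic_pairs [OF assms(1,2)]
    by (subst card_Un_disjoint) auto
  moreover have "card (case_prod mult_der ` ?P) = card ?P"
    by (rule card_image, rule inj_on_subset [OF inj_on_mult_der admissible])
  moreover have "card (case_prod mult_der ` ?P \<union> Z) = card (case_prod mult_der ` ?P) + card Z"
    using finite_P assms(4,6) admissible by (subst card_Un_disjoint) auto
  moreover have "case_prod mult_der ` ?P \<union> Z \<subseteq> Der oplus neg"
    using admissible assms(5) mult_der_derivation by (auto simp: admissible_pairs_def)
  ultimately show ?thesis
    using card_ge_subset [of "case_prod mult_der ` ?P \<union> Z"] finite_P assms(4) by simp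
qed

lemma strict_pairs_nonempty_if_odot:
  assumes "a \<noteq> \<zero>" "a \<noteq> \<one>" "x \<noteq> \<one>" "x \<noteq> a" "a \<odot> x \<noteq> \<zero>"
  shows "strict_pairs \<noteq> {}"
proof (cases "a \<odot> x = a")
  case True
  then have "a \<preceq> x"
    using odot_le_right [of a x] by simp
  then have "(x, a) \<in> strict_pairs"
    using assms by (auto simp: strict_pairs_def)
  then show ?thesis by blast
next
  case False
  then have "(a, a \<odot> x) \<in> strict_pairs"
    using assms odot_le_left [of a x] by (auto simp: strict_pairs_def)
  then show ?thesis by blast
qed

lemma strict_pairs_nonempty:
  assumes "p \<notin> {\<zero>, \<one>}" "q \<notin> {\<zero>, \<one>}" "r \<notin> {\<zero>, \<one>}"
    and "p \<noteq> q" "p \<noteq> r" "q \<noteq> r"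
  shows "strict_pairs \<noteq> {}"
proof -
  consider "p \<odot> neg q = \<zero>" | "p \<odot> neg r = \<zero>" | "p \<odot> neg q \<noteq> \<zero>" "p \<odot> neg r \<noteq> \<zero>"
    by blast
  then show ?thesis
  proof cases
    case 1
    then have "p \<preceq> q"
      by (simp add: le_iff_odot_neg_eq_zero)
    with assms have "(q, p) \<in> strict_pairs"
      by (simp add: strict_pairs_def)
    then show ?thesis by blast
  next
    case 2
    then have "p \<preceq> r"
      by (simp add: le_iff_odot_neg_eq_zero)
    with assms have "(r, p) \<in> strict_pairs"
      by (simp add: strict_pairs_def)
    then show ?thesis by blast
  next
    case 3
    obtain x where x: "x \<in> {neg q, neg r}" "x \<noteq> p"
      using \<open>q \<noteq> r\<close> by (metis insert_iff neg_eq_iff)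
    then have "x \<noteq> \<one>" "p \<odot> x \<noteq> \<zero>"
      using assms 3 by auto
    with x(2) assms(1) show ?thesis
      by (intro strict_pairs_nonempty_if_odot) auto
  qed
qed

lemma card_ge_Der_3n_minus_2_finite:
  assumes "finite (UNIV :: 'a set)" "5 \<le> card (UNIV :: 'a set)"
  shows "card_ge (3 * card (UNIV :: 'a set) - 2) (Der oplus neg)"
proof -
  let ?n = "card (UNIV :: 'a set)" and ?M = "UNIV - {\<zero>, \<one>}"
  have "\<zero> \<noteq> \<one>"
    using zero_neq_one assms(2) by simp
  have card_M: "3 \<le> card ?M"
    using assms card_Diff_subset [of "{\<zero>, \<one>}" UNIV] \<open>\<zero> \<noteq> \<one>\<close> by simp
  show ?thesis
  proof (cases "\<exists>a. a \<noteq> \<zero> \<and> (\<forall>x. x \<noteq> \<one> \<longrightarrow> a \<odot> x = \<zero>)")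
    case True
    then obtain a where "a \<noteq> \<zero>" and annihilates: "\<And>x. x \<noteq> \<one> \<Longrightarrow> a \<odot> x = \<zero>"
      by blast
    have below: "a \<preceq> c" if "c \<noteq> \<zero>" for c
      using annihilates [of "neg c"] that by (simp add: le_iff_odot_neg_eq_zero)
    let ?Q = "(\<lambda>c. (c, a)) ` (?M - {a})"
    have "?Q \<subseteq> strict_pairs"
      using \<open>a \<noteq> \<zero>\<close> below by (auto simp: strict_pairs_def)
    moreover have "2 \<le> card ?Q"
      using card_M assms(1) by (auto simp: card_image inj_on_def card_Diff_singleton_if)
    ultimately show ?thesis
      using card_ge_Der_from_pairs [of ?Q "{}"] assms(1) \<open>\<zero> \<noteq> \<one>\<close> card_ge_mono by fastforce
  next
    case False
    obtain T where "T \<subseteq> ?M" "card T = 3"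
      using card_M obtain_subset_with_card_n by metis
    then obtain p q r where "p \<in> ?M" "q \<in> ?M" "r \<in> ?M" "p \<noteq> q" "p \<noteq> r" "q \<noteq> r"
      by (auto simp: card_3_iff)
    then obtain s where "s \<in> strict_pairs"
      using strict_pairs_nonempty [of p q r] by auto
    have "mult_der \<zero> \<zero> = (\<lambda>_. \<zero>)"
      by (simp add: mult_der_def fun_eq_iff)
    then have zero_der: "(\<lambda>_. \<zero>) \<in> Der oplus neg"
      using mult_der_derivation [of \<zero> \<zero>] le_refl by simp
    have zero_der_new: "(\<lambda>_. \<zero>) \<notin> case_prod mult_der ` admissible_pairs"
    proof
      assume "(\<lambda>_. \<zero>) \<in> case_prod mult_der ` admissible_pairs"
      then obtain a b where "a \<noteq> \<zero>" "mult_der a b = (\<lambda>_. \<zero>)"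
        by (auto simp: admissible_pairs_def)
      then have "a \<noteq> \<zero> \<and> (\<forall>x. x \<noteq> \<one> \<longrightarrow> a \<odot> x = \<zero>)"
        by (metis mult_der_def)
      with False show False by blast
    qed
    have "card_ge (3 * ?n - 4 + card {s} + card {\<lambda>_ :: 'a. \<zero>}) (Der oplus neg)"
      using \<open>s \<in> strict_pairs\<close> zero_der zero_der_new
      by (intro card_ge_Der_from_pairs [OF assms(1) \<open>\<zero> \<noteq> \<one>\<close>]) auto
    moreover have "3 * ?n - 4 + card {s} + card {\<lambda>_ :: 'a. \<zero>} = 3 * ?n - 2"
      using assms(2) by simp
    ultimately show ?thesis by simp
  qed
qed

lemma infinite_Der:
  assumes "infinite (UNIV :: 'a set)" shows "infinite (Der oplus neg)"
proof
  assume "finite (Der oplus neg)"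
  moreover have "range (\<lambda>a. mult_der a a) \<subseteq> Der oplus neg"
    using mult_der_derivation le_refl by blast
  moreover have "inj (\<lambda>a. mult_der a a)"
    by (rule injI) (metis mult_der_def)
  ultimately show False
    using assms by (meson finite_imageD finite_subset)
qed

lemma card_ge_Der_3k_minus_4:
  assumes "card_ge k (UNIV :: 'a set)" "2 \<le> k"
  shows "card_ge (3 * k - 4) (Der oplus neg)"
proof (cases "finite (UNIV :: 'a set)")
  case True
  with assms have "k \<le> card (UNIV :: 'a set)"
    by (simp add: card_ge_def)
  moreover from this have "\<zero> \<noteq> \<one>"
    using zero_neq_one assms(2) by simp
  ultimately show ?thesis
    using card_ge_Der_from_pairs [OF True, of "{}" "{}"] by (simp add: card_ge_mono)
next
  case False
  then show ?thesis
    using infinite_Der by (simp add: card_ge_def)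
qed

lemma card_ge_Der_3k_minus_2:
  assumes "card_ge k (UNIV :: 'a set)" "5 \<le> k"
  shows "card_ge (3 * k - 2) (Der oplus neg)"
proof (cases "finite (UNIV :: 'a set)")
  case True
  with assms have "k \<le> card (UNIV :: 'a set)"
    by (simp add: card_ge_def)
  then show ?thesis
    using card_ge_Der_3n_minus_2_finite [OF True] assms(2) by (simp add: card_ge_mono)
next
  case False
  then show ?thesis
    using infinite_Der by (simp add: card_ge_def)
qed

end

theorem corollary3p15:
  fixes oplus :: "'a \<Rightarrow> 'a \<Rightarrow> 'a" and neg :: "'a \<Rightarrow> 'a" and zero :: 'a
  assumes "mv_algebra oplus neg zero"
  shows "(card_ge 3 (UNIV :: 'a set) \<longrightarrow> card_ge 5 (Der oplus neg)) \<and>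
         (card_ge 4 (UNIV :: 'a set) \<longrightarrow> card_ge 7 (Der oplus neg)) \<and>
         (card_ge 5 (UNIV :: 'a set) \<longrightarrow> card_ge 13 (Der oplus neg))"
proof -
  interpret mv oplus neg zero
    by (rule mv.intro) (fact assms)
  show ?thesis
    using card_ge_Der_3k_minus_4 [of 3] card_ge_Der_3k_minus_4 [of 4] card_ge_Der_3k_minus_2 [of 5]
      card_ge_mono [of 8 _ 7]
    by auto
qed

end
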